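(* Let $2\le k\le d$ and let $|\psi\rangle=\sum_{i=1}^dc_i|i\rangle|\underline{2^{d-i}}\rangle\in\mathbb{C}^d\otimes(\mathbb{C}^2)^{\otimes d}$ be a unit vector with $|c_1|\ge|c_2|\ge\cdots\ge|c_d|$, regarded as a pure state of $d+1$ parties (the qudit and $d$ qubits). Then $$\max_{|\varsigma\rangle\in\mathcal{P}^{(k)}}|\langle\varsigma|\psi\rangle|^2=\max_{|\sigma\rangle\in\mathcal{B}^{(k)}}|\langle\sigma|\psi\rangle|^2=\sum_{i=1}^{k-1}|c_i|^2,$$ the maxima being over pure states, and the value is attained by $|\psi^c\rangle=\big(\sum_{i=1}^{k-1}|c_i|^2\big)^{-1/2}\sum_{i=1}^{k-1}c_i|i\rangle|\underline{2^{d-i}}\rangle\in\mathcal{B}^{(k)}$ (whenever $\sum_{i=1}^{k-1}|c_i|^2>0$).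
   Context: $\{|i\rangle\}_{i=1}^d$ is an orthonormal basis of $\mathbb{C}^d$ and $|\underline{2^{d-i}}\rangle=|0\rangle^{\otimes(i-1)}\otimes|1\rangle\otimes|0\rangle^{\otimes(d-i)}\in(\mathbb{C}^2)^{\otimes d}$. A pure state of the $d+1$ parties is $k$-producible if it is a tensor product of factors each pertaining to at most $k$ parties; $\mathcal{P}^{(k)}$ denotes the $k$-producible states. $\mathcal{B}^{(k)}$ denotes the set of pure states of the form $\sum_{j\in J}d_j|j\rangle|\underline{2^{d-j}}\rangle$ with $J\subseteq\{1,\dots,d\}$, $|J|\le k-1$ (these are $k$-producible), together with their convex combinations for mixed states. *)

theory Defs
  imports Complex_Main
begin

text \<open>Parties are indexed 0..n-1; party p has local
  dimension dm p. A computational basis configuration is a function x assigning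
  to each party p < n a local index x p < dm p (and 0 to all other naturals).
  A (not necessarily normalised) vector is a map from configurations to complex
  amplitudes; values outside the configuration set are irrelevant.\<close>

definition configs :: "nat set \<Rightarrow> (nat \<Rightarrow> nat) \<Rightarrow> (nat \<Rightarrow> nat) set" where
  "configs S dm = {x. (\<forall>p\<in>S. x p < dm p) \<and> (\<forall>p. p \<notin> S \<longrightarrow> x p = 0)}"

definition restr :: "nat set \<Rightarrow> (nat \<Rightarrow> nat) \<Rightarrow> (nat \<Rightarrow> nat)" where
  "restr B x = (\<lambda>p. if p \<in> B then x p else 0)"

definition inner_st :: "nat \<Rightarrow> (nat \<Rightarrow> nat) \<Rightarrow> ((nat \<Rightarrow> nat) \<Rightarrow> complex)
    \<Rightarrow> ((nat \<Rightarrow> nat) \<Rightarrow> complex) \<Rightarrow> complex" where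
  "inner_st n dm phi psi = (\<Sum>x\<in>configs {..<n} dm. cnj (phi x) * psi x)"

definition is_state :: "nat \<Rightarrow> (nat \<Rightarrow> nat) \<Rightarrow> ((nat \<Rightarrow> nat) \<Rightarrow> complex) \<Rightarrow> bool" where
  "is_state n dm psi \<longleftrightarrow> (\<Sum>x\<in>configs {..<n} dm. (cmod (psi x))\<^sup>2) = 1"

definition k_producible :: "nat \<Rightarrow> (nat \<Rightarrow> nat) \<Rightarrow> nat \<Rightarrow> ((nat \<Rightarrow> nat) \<Rightarrow> complex) \<Rightarrow> bool" where
  "k_producible n dm k psi \<longleftrightarrow>
     (\<exists>P :: nat set set.
        \<Union>P = {..<n} \<and>
        (\<forall>B\<in>P. B \<noteq> {} \<and> card B \<le> k) \<and>
        (\<forall>A\<in>P. \<forall>B\<in>P. A \<noteq> B \<longrightarrow> A \<inter> B = {}) \<and>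
        (\<exists>f :: nat set \<Rightarrow> (nat \<Rightarrow> nat) \<Rightarrow> complex.
           \<forall>x\<in>configs {..<n} dm. psi x = (\<Prod>B\<in>P. f B (restr B x))))"

definition qdim :: "nat \<Rightarrow> nat \<Rightarrow> nat" where
  "qdim d p = (if p = 0 then d else 2)"

text \<open>Configuration of |j\<rangle>|2^(d-j)\<rangle> for j in 1..d: qudit in level j
  (local index j-1), qubit j equal to 1, all other qubits 0.\<close>
definition basis_cfg :: "nat \<Rightarrow> (nat \<Rightarrow> nat)" where
  "basis_cfg j = (\<lambda>p. if p = 0 then j - 1 else if p = j then 1 else 0)"

definition ket :: "nat \<Rightarrow> (nat \<Rightarrow> nat) \<Rightarrow> complex" where
  "ket j = (\<lambda>x. if x = basis_cfg j then 1 else 0)"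

definition wvec :: "nat set \<Rightarrow> (nat \<Rightarrow> complex) \<Rightarrow> (nat \<Rightarrow> nat) \<Rightarrow> complex" where
  "wvec J a = (\<lambda>x. \<Sum>j\<in>J. a j * ket j x)"

definition B_states :: "nat \<Rightarrow> nat \<Rightarrow> ((nat \<Rightarrow> nat) \<Rightarrow> complex) set" where
  "B_states d k = {s. is_state (Suc d) (qdim d) s \<and>
      (\<exists>J a. J \<subseteq> {1..d} \<and> card J \<le> k - 1 \<and> s = wvec J a)}"

definition is_max_value :: "real \<Rightarrow> 'a set \<Rightarrow> ('a \<Rightarrow> real) \<Rightarrow> bool" where
  "is_max_value S A f \<longleftrightarrow> (\<exists>x\<in>A. f x = S) \<and> (\<forall>x\<in>A. f x \<le> S)"

end

theory Submission
  imports Defs "HOL-Analysis.Convex"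
begin

text \<open>A k-producible state is a product across the cut between the block B containing the
  qudit and the remaining parties. The terms of \<open>\<psi>\<close> with qubit i in B all carry the same
  state of the complement, while the terms with i outside B carry pairwise orthogonal ones.
  By Cauchy--Schwarz the squared overlap is therefore at most a convex combination of the
  weight of the terms with i in B and the single weights \<open>|c i|\<^sup>2\<close> with i outside B. As B
  contains at most k - 1 qubits and the \<open>|c i|\<close> decrease, each of these is at most the sum of
  the k - 1 largest weights. The normalised truncation of \<open>\<psi>\<close> to its first k - 1 terms lies
  in \<open>\<B>\<^sup>(\<^sup>k\<^sup>)\<close> and attains this bound.\<close>

lemma finite_configs:
  assumes "finite S"
  shows "finite (configs S dm)"
proof -
  have "configs S dm \<subseteq> (\<lambda>g p. if p \<in> S then g p else 0) ` (\<Pi>\<^sub>E p\<in>S. {..<dm p})"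
  proof
    fix x assume "x \<in> configs S dm"
    then show "x \<in> (\<lambda>g p. if p \<in> S then g p else 0) ` (\<Pi>\<^sub>E p\<in>S. {..<dm p})"
      by (intro image_eqI[of _ _ "restrict x S"]) (auto simp: configs_def fun_eq_iff)
  qed
  moreover have "finite ((\<lambda>g p. if p \<in> S then g p else 0) ` (\<Pi>\<^sub>E p\<in>S. {..<dm p}))"
    using assms by (intro finite_imageI finite_PiE) auto
  ultimately show ?thesis by (rule finite_subset)
qed

lemma basis_cfg_in_configs: "1 \<le> i \<Longrightarrow> i \<le> d \<Longrightarrow> basis_cfg i \<in> configs {..<Suc d} (qdim d)"
  unfolding configs_def basis_cfg_def qdim_def by auto

lemma basis_cfg_eq_iff:
  assumes "1 \<le> i" and "1 \<le> j"
  shows "basis_cfg i = basis_cfg j \<longleftrightarrow> i = j"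
proof
  assume "basis_cfg i = basis_cfg j"
  then have "i - 1 = j - 1" by (metis basis_cfg_def)
  with assms show "i = j" by simp
qed simp

lemma inj_on_basis_cfg: "inj_on basis_cfg {1..}"
  by (rule inj_onI) (simp add: basis_cfg_eq_iff)

lemma wvec_basis_cfg:
  assumes "J \<subseteq> {1..d}" and "1 \<le> i"
  shows "wvec J a (basis_cfg i) = (if i \<in> J then a i else 0)"
proof -
  have "wvec J a (basis_cfg i) = (\<Sum>j\<in>J. if j = i then a j else 0)"
    unfolding wvec_def ket_def
  proof (intro sum.cong refl)
    fix j assume "j \<in> J"
    then have "basis_cfg i = basis_cfg j \<longleftrightarrow> j = i"
      using assms basis_cfg_eq_iff[of i j] by auto
    then show "a j * (if basis_cfg i = basis_cfg j then 1 else 0) = (if j = i then a j else 0)"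
      by simp
  qed
  also have "\<dots> = (if i \<in> J then a i else 0)"
    using finite_subset[OF assms(1)] by (simp add: sum.delta')
  finally show ?thesis .
qed

lemma wvec_eq_0: "x \<notin> basis_cfg ` J \<Longrightarrow> wvec J a x = 0"
  unfolding wvec_def ket_def by (intro sum.neutral) auto

lemma sum_norm_wvec:
  assumes "J \<subseteq> {1..d}"
  shows "(\<Sum>x\<in>configs {..<Suc d} (qdim d). (cmod (wvec J a x))\<^sup>2) = (\<Sum>j\<in>J. (cmod (a j))\<^sup>2)"
proof -
  have "basis_cfg ` J \<subseteq> configs {..<Suc d} (qdim d)"
    using assms by (auto intro!: basis_cfg_in_configs)
  then have "(\<Sum>x\<in>configs {..<Suc d} (qdim d). (cmod (wvec J a x))\<^sup>2)
      = (\<Sum>x\<in>basis_cfg ` J. (cmod (wvec J a x))\<^sup>2)"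
    by (intro sum.mono_neutral_right finite_configs) (auto simp: wvec_eq_0)
  also have "\<dots> = (\<Sum>j\<in>J. (cmod (wvec J a (basis_cfg j)))\<^sup>2)"
    using assms by (intro sum.reindex[unfolded comp_def] inj_on_subset[OF inj_on_basis_cfg]) auto
  also have "\<dots> = (\<Sum>j\<in>J. (cmod (a j))\<^sup>2)"
    using assms by (intro sum.cong refl) (subst wvec_basis_cfg[OF assms]; auto)
  finally show ?thesis .
qed

lemma inner_st_wvec:
  assumes "J \<subseteq> {1..d}"
  shows "inner_st (Suc d) (qdim d) s (wvec J c) = (\<Sum>i\<in>J. cnj (s (basis_cfg i)) * c i)"
proof -
  have "inner_st (Suc d) (qdim d) s (wvec J c)
      = (\<Sum>j\<in>J. \<Sum>x\<in>configs {..<Suc d} (qdim d). cnj (s x) * (c j * ket j x))"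
    unfolding inner_st_def wvec_def by (simp add: sum_distrib_left sum.swap[of _ J])
  also have "\<dots> = (\<Sum>j\<in>J. cnj (s (basis_cfg j)) * c j)"
  proof (intro sum.cong refl)
    fix j assume "j \<in> J"
    then have "basis_cfg j \<in> configs {..<Suc d} (qdim d)"
      using assms by (intro basis_cfg_in_configs) auto
    then show "(\<Sum>x\<in>configs {..<Suc d} (qdim d). cnj (s x) * (c j * ket j x))
        = cnj (s (basis_cfg j)) * c j"
      by (simp add: ket_def if_distrib sum.delta' finite_configs cong: if_cong)
  qed
  finally show ?thesis .
qed

lemma inner_st_wvec_wvec:
  assumes "J \<subseteq> {1..d}" and "J' \<subseteq> {1..d}"
  shows "inner_st (Suc d) (qdim d) (wvec J a) (wvec J' b) = (\<Sum>i\<in>J \<inter> J'. cnj (a i) * b i)"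
proof -
  have "inner_st (Suc d) (qdim d) (wvec J a) (wvec J' b)
      = (\<Sum>i\<in>J'. if i \<in> J then cnj (a i) * b i else 0)"
    using assms by (simp add: inner_st_wvec) (intro sum.cong refl; subst wvec_basis_cfg[OF assms(1)]; auto)
  also have "\<dots> = (\<Sum>i\<in>J \<inter> J'. cnj (a i) * b i)"
    using finite_subset[OF assms(2)] by (subst Int_commute) (simp add: sum.inter_restrict)
  finally show ?thesis .
qed

lemma sum_le_sum_initial_segment:
  fixes g :: "nat \<Rightarrow> real"
  assumes antitone: "\<And>i j. 1 \<le> i \<Longrightarrow> i \<le> j \<Longrightarrow> j \<le> d \<Longrightarrow> g j \<le> g i"
    and nonneg: "\<And>i. 0 \<le> g i" and Q: "Q \<subseteq> {1..d}" and "card Q \<le> m" and "m \<le> d"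
  shows "sum g Q \<le> sum g {1..m}"
proof -
  have "finite Q" using Q finite_subset by blast
  define Q' where "Q' = Q - {1..m}"
  define M' where "M' = {1..m} - Q"
  have "card (Q \<inter> {1..m}) + card Q' \<le> card (Q \<inter> {1..m}) + card M'"
    using card_Int_Diff[OF \<open>finite Q\<close>, of "{1..m}"] \<open>card Q \<le> m\<close>
      card_Int_Diff[OF finite_atLeastAtMost[of 1 m], of Q]
    by (simp add: Q'_def M'_def Int_commute)
  then have card_le: "card Q' \<le> card M'" by simp
  have "g i \<le> g m" if "i \<in> Q'" for i
  proof -
    have "0 < card Q" using that \<open>finite Q\<close> card_gt_0_iff by (auto simp: Q'_def)
    then show ?thesis using that Q \<open>card Q \<le> m\<close> antitone[of m i] by (auto simp: Q'_def)
  qed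
  then have "sum g Q' \<le> card Q' * g m"
    using sum_mono[of Q' g "\<lambda>_. g m"] by simp
  also have "\<dots> \<le> card M' * g m"
    using card_le nonneg by (simp add: mult_right_mono)
  also have "\<dots> \<le> sum g M'"
    using sum_mono[of M' "\<lambda>_. g m" g] antitone[of _ m] \<open>m \<le> d\<close> by (auto simp: M'_def)
  finally show ?thesis
    using sum.Int_Diff[OF \<open>finite Q\<close>, of g "{1..m}"]
      sum.Int_Diff[OF finite_atLeastAtMost[of 1 m], of g Q]
    by (simp add: Q'_def M'_def Int_commute)
qed

lemma k_producible_if_vanishes_off_block:
  assumes B: "B \<subseteq> {..<n}" "B \<noteq> {}" "card B \<le> k"
    and vanish: "\<And>x p. x \<in> configs {..<n} dm \<Longrightarrow> p \<notin> B \<Longrightarrow> x p \<noteq> 0 \<Longrightarrow> s x = 0"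
  shows "k_producible n dm k s"
proof -
  have "finite B" using B(1) finite_subset by blast
  then have "0 < card B" using B(2) by (simp add: card_gt_0_iff)
  then have "1 \<le> k" using B(3) by simp
  define P where "P = insert B ((\<lambda>p. {p}) ` ({..<n} - B))"
  define f where "f C y = (if C = B then s y else if y = (\<lambda>_. 0) then 1 else 0)" for C y
  have "s x = (\<Prod>C\<in>P. f C (restr C x))" if x: "x \<in> configs {..<n} dm" for x
  proof -
    have "(\<Prod>C\<in>P. f C (restr C x)) = f B (restr B x) * (\<Prod>C\<in>(\<lambda>p. {p}) ` ({..<n} - B). f C (restr C x))"
      unfolding P_def by (rule prod.insert) auto
    also have "\<dots> = s (restr B x) * (\<Prod>p\<in>{..<n} - B. f {p} (restr {p} x))"
      by (subst prod.reindex) (auto simp: inj_on_def f_def)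
    also have "\<dots> = s (restr B x) * (\<Prod>p\<in>{..<n} - B. if x p = 0 then 1 else 0)"
    proof (intro arg_cong2[where f = "(*)"] prod.cong refl)
      fix p assume "p \<in> {..<n} - B"
      then have "{p} \<noteq> B" by auto
      moreover have "restr {p} x = (\<lambda>_. 0) \<longleftrightarrow> x p = 0"
        by (auto simp: restr_def fun_eq_iff)
      ultimately show "f {p} (restr {p} x) = (if x p = 0 then 1 else 0)"
        by (simp add: f_def)
    qed
    also have "\<dots> = s x"
    proof (cases "\<exists>p\<in>{..<n} - B. x p \<noteq> 0")
      case True
      then show ?thesis using vanish[OF x] by auto
    next
      case False
      then have "restr B x = x" using x by (auto simp: restr_def configs_def fun_eq_iff)
      with False show ?thesis by simp
    qed
    finally show ?thesis ..
  qed
  moreover have "\<Union>P = {..<n}" and "\<forall>C\<in>P. C \<noteq> {} \<and> card C \<le> k"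
    and "\<forall>C\<in>P. \<forall>C'\<in>P. C \<noteq> C' \<longrightarrow> C \<inter> C' = {}"
    using B \<open>1 \<le> k\<close> by (auto simp: P_def)
  ultimately show ?thesis unfolding k_producible_def by blast
qed

lemma k_producible_wvec:
  assumes "J \<subseteq> {1..d}" and "card J \<le> k - 1" and "1 \<le> k"
  shows "k_producible (Suc d) (qdim d) k (wvec J a)"
proof (rule k_producible_if_vanishes_off_block)
  have "finite J" using assms(1) finite_subset by blast
  moreover have "0 \<notin> J" using assms(1) by auto
  ultimately show "card (insert 0 J) \<le> k" using assms by simp
  show "insert 0 J \<subseteq> {..<Suc d}" using assms(1) by auto
  show "wvec J a x = 0" if "p \<notin> insert 0 J" and "x p \<noteq> 0" for x p
    using that by (intro wvec_eq_0) (auto simp: basis_cfg_def split: if_splits)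
qed simp

lemma B_states_k_producible:
  "1 \<le> k \<Longrightarrow> B_states d k \<subseteq> {s. is_state (Suc d) (qdim d) s \<and> k_producible (Suc d) (qdim d) k s}"
  unfolding B_states_def using k_producible_wvec by auto

lemma k_producible_factor_block:
  assumes "k_producible n dm k s" and "p0 < n"
  obtains B g h where "p0 \<in> B" "B \<subseteq> {..<n}" "card B \<le> k"
    "\<And>x. x \<in> configs {..<n} dm \<Longrightarrow> s x = g (restr B x) * h x"
    "\<And>x y. (\<And>p. p \<notin> B \<Longrightarrow> x p = y p) \<Longrightarrow> h x = h y"
proof -
  obtain P f where UP: "\<Union>P = {..<n}" and blocks: "\<forall>B\<in>P. B \<noteq> {} \<and> card B \<le> k"
    and disj: "\<forall>A\<in>P. \<forall>B\<in>P. A \<noteq> B \<longrightarrow> A \<inter> B = {}"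
    and product: "\<forall>x\<in>configs {..<n} dm. s x = (\<Prod>B\<in>P. f B (restr B x))"
    using assms(1) unfolding k_producible_def by metis
  have "p0 \<in> \<Union>P" using UP assms(2) by simp
  then obtain B where B: "B \<in> P" "p0 \<in> B" by blast
  have "P \<subseteq> Pow {..<n}" using UP by blast
  then have "finite P" by (rule finite_subset) simp
  define h where "h x = (\<Prod>C\<in>P - {B}. f C (restr C x))" for x
  show ?thesis
  proof (rule that[of B "f B" h])
    show "p0 \<in> B" by (rule B(2))
    show "B \<subseteq> {..<n}" using UP B(1) by blast
    show "card B \<le> k" using blocks B(1) by blast
    show "s x = f B (restr B x) * h x" if "x \<in> configs {..<n} dm" for x
      using product that \<open>finite P\<close> B(1) unfolding h_def by (simp add: prod.remove)
    show "h x = h y" if "\<And>p. p \<notin> B \<Longrightarrow> x p = y p" for x y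
      unfolding h_def
    proof (intro prod.cong refl)
      fix C assume "C \<in> P - {B}"
      then have "C \<inter> B = {}" using disj B(1) by blast
      then have "restr C x = restr C y" using that by (auto simp: restr_def fun_eq_iff)
      then show "f C (restr C x) = f C (restr C y)" by simp
    qed
  qed
qed

text \<open>The qudit in level i, qubit i excited iff it lies in B, and outside B exactly qubit j
  excited (none if j = 0). For i \<in> {1..d} and j \<in> insert 0 ({1..d} - B) these configurations
  are distinct, and \<open>basis_cfg i\<close> is the one with j = 0 or j = i according as i \<in> B or not.\<close>

definition cut_cfg :: "nat set \<Rightarrow> nat \<Rightarrow> nat \<Rightarrow> nat \<Rightarrow> nat" where
  "cut_cfg B i j = (\<lambda>p. if p = 0 then i - 1 else if (p = i \<and> i \<in> B) \<or> p = j then 1 else 0)"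

lemma cut_cfg_outside: "p \<noteq> 0 \<Longrightarrow> p \<notin> B \<Longrightarrow> cut_cfg B i j p = (if p = j then 1 else 0)"
  by (auto simp: cut_cfg_def)

lemma cut_cfg_eq_imp_eq:
  assumes "cut_cfg B i j = cut_cfg B i' j'" and "j \<noteq> 0" and "j \<notin> B"
  shows "j' = j"
  using fun_cong[OF assms(1), of j] assms(2,3) by (simp add: cut_cfg_outside split: if_splits)

lemma inj_on_cut_cfg:
  "inj_on (\<lambda>(i, j). cut_cfg B i j) ({1..d} \<times> insert 0 ({1..d} - B))"
proof (rule inj_onI, clarify)
  fix i j i' j'
  assume i: "i \<in> {1..d}" "i' \<in> {1..d}" and j: "j \<in> insert 0 ({1..d} - B)" "j' \<in> insert 0 ({1..d} - B)"
    and eq: "cut_cfg B i j = cut_cfg B i' j'"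
  have "i - 1 = i' - 1" using fun_cong[OF eq, of 0] by (simp add: cut_cfg_def)
  then have "i = i'" using i by auto
  moreover have "j = j'"
  proof (cases "j = 0")
    case True
    then show ?thesis using j(2) cut_cfg_eq_imp_eq[OF eq[symmetric]] by auto
  next
    case False
    then show ?thesis using j(1) cut_cfg_eq_imp_eq[OF eq] by auto
  qed
  ultimately show "i = i' \<and> j = j'" ..
qed

lemma basis_amplitudes_factor:
  assumes st: "is_state (Suc d) (qdim d) s" and "0 \<in> B"
    and fac: "\<And>x. x \<in> configs {..<Suc d} (qdim d) \<Longrightarrow> s x = g (restr B x) * h x"
    and loc: "\<And>x y. (\<And>p. p \<notin> B \<Longrightarrow> x p = y p) \<Longrightarrow> h x = h y"
  obtains \<alpha> \<beta> :: "nat \<Rightarrow> complex"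
  where "\<And>i. i \<in> {1..d} \<Longrightarrow> s (basis_cfg i) = \<alpha> i * \<beta> (if i \<in> B then 0 else i)"
    and "(\<Sum>i=1..d. (cmod (\<alpha> i))\<^sup>2) * (\<Sum>j\<in>insert 0 ({1..d} - B). (cmod (\<beta> j))\<^sup>2) \<le> 1"
proof -
  let ?J = "insert 0 ({1..d} - B)" and ?C = "configs {..<Suc d} (qdim d)"
  define \<alpha> where "\<alpha> i = g (restr B (cut_cfg B i 0))" for i
  define \<beta> where "\<beta> j = h (cut_cfg B 1 j)" for j
  have in_C: "cut_cfg B i j \<in> ?C" if "i \<in> {1..d}" "j \<in> ?J" for i j
    using that by (auto simp: configs_def cut_cfg_def qdim_def)
  have s_cut: "s (cut_cfg B i j) = \<alpha> i * \<beta> j" if "i \<in> {1..d}" "j \<in> ?J" for i j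
  proof -
    have "restr B (cut_cfg B i j) = restr B (cut_cfg B i 0)"
      using that \<open>0 \<in> B\<close> by (auto simp: restr_def cut_cfg_def fun_eq_iff)
    moreover have "h (cut_cfg B i j) = h (cut_cfg B 1 j)"
      using \<open>0 \<in> B\<close> by (intro loc) (metis cut_cfg_outside)
    ultimately show ?thesis using fac[OF in_C[OF that]] by (simp add: \<alpha>_def \<beta>_def)
  qed
  show ?thesis
  proof
    fix i assume i: "i \<in> {1..d}"
    have "basis_cfg i = cut_cfg B i (if i \<in> B then 0 else i)"
      using i by (auto simp: basis_cfg_def cut_cfg_def fun_eq_iff)
    then show "s (basis_cfg i) = \<alpha> i * \<beta> (if i \<in> B then 0 else i)"
      using i s_cut by auto
  next
    have "(\<Sum>i=1..d. (cmod (\<alpha> i))\<^sup>2) * (\<Sum>j\<in>?J. (cmod (\<beta> j))\<^sup>2)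
        = (\<Sum>(i, j)\<in>{1..d} \<times> ?J. (cmod (s (cut_cfg B i j)))\<^sup>2)"
      unfolding sum_product sum.cartesian_product
      by (intro sum.cong refl) (auto simp: s_cut norm_mult power_mult_distrib)
    also have "\<dots> = (\<Sum>x\<in>(\<lambda>(i, j). cut_cfg B i j) ` ({1..d} \<times> ?J). (cmod (s x))\<^sup>2)"
      by (subst sum.reindex[OF inj_on_cut_cfg]) (simp add: comp_def case_prod_beta)
    also have "\<dots> \<le> (\<Sum>x\<in>?C. (cmod (s x))\<^sup>2)"
      using in_C by (intro sum_mono2 finite_configs) auto
    also have "\<dots> = 1" using st unfolding is_state_def .
    finally show "(\<Sum>i=1..d. (cmod (\<alpha> i))\<^sup>2) * (\<Sum>j\<in>?J. (cmod (\<beta> j))\<^sup>2) \<le> 1" .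
  qed
qed

lemma sum_block_weighted_le:
  fixes g b :: "nat \<Rightarrow> real"
  assumes antitone: "\<And>i j. 1 \<le> i \<Longrightarrow> i \<le> j \<Longrightarrow> j \<le> d \<Longrightarrow> g j \<le> g i"
    and "\<And>i. 0 \<le> g i" and "\<And>j. 0 \<le> b j"
    and "card ({1..d} \<inter> B) \<le> m" and "1 \<le> m" and "m \<le> d"
  shows "(\<Sum>i=1..d. b (if i \<in> B then 0 else i) * g i)
    \<le> (\<Sum>i=1..m. g i) * (\<Sum>j\<in>insert 0 ({1..d} - B). b j)"
proof -
  let ?T = "\<Sum>i=1..m. g i"
  have "(\<Sum>i\<in>{1..d} \<inter> B. g i) \<le> ?T"
    using assms by (intro sum_le_sum_initial_segment[where d = d]) auto
  then have inside: "(\<Sum>i\<in>{1..d} \<inter> B. b 0 * g i) \<le> b 0 * ?T"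
    using assms(3) by (simp add: mult_left_mono flip: sum_distrib_left)
  have "g i \<le> ?T" if "i \<in> {1..d}" for i
    using that antitone[of 1 i] \<open>1 \<le> m\<close> member_le_sum[of 1 "{1..m}" g] assms(2) by force
  then have outside: "(\<Sum>i\<in>{1..d} - B. b i * g i) \<le> (\<Sum>i\<in>{1..d} - B. b i) * ?T"
    unfolding sum_distrib_right using assms(3) by (intro sum_mono mult_left_mono) auto
  have "(\<Sum>i=1..d. b (if i \<in> B then 0 else i) * g i)
      = (\<Sum>i\<in>{1..d} \<inter> B. b 0 * g i) + (\<Sum>i\<in>{1..d} - B. b i * g i)"
    by (subst sum.Int_Diff[of _ _ B]) (auto intro!: arg_cong2[where f = "(+)"] sum.cong)
  also have "\<dots> \<le> ?T * (\<Sum>j\<in>insert 0 ({1..d} - B). b j)"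
    using inside outside by (simp add: algebra_simps)
  finally show ?thesis .
qed

lemma k_producible_overlap_le:
  fixes c :: "nat \<Rightarrow> complex"
  assumes "is_state (Suc d) (qdim d) s" and "k_producible (Suc d) (qdim d) k s"
    and antitone: "\<forall>i j. 1 \<le> i \<longrightarrow> i \<le> j \<longrightarrow> j \<le> d \<longrightarrow> cmod (c j) \<le> cmod (c i)"
    and "2 \<le> k" and "k \<le> d"
  shows "(cmod (inner_st (Suc d) (qdim d) s (wvec {1..d} c)))\<^sup>2 \<le> (\<Sum>i=1..k-1. (cmod (c i))\<^sup>2)"
proof -
  obtain B g h where "0 \<in> B" "B \<subseteq> {..<Suc d}" "card B \<le> k"
    and fac: "\<And>x. x \<in> configs {..<Suc d} (qdim d) \<Longrightarrow> s x = g (restr B x) * h x"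
    and loc: "\<And>x y. (\<And>p. p \<notin> B \<Longrightarrow> x p = y p) \<Longrightarrow> h x = h y"
    using k_producible_factor_block[OF assms(2)] by blast
  obtain \<alpha> \<beta> where s_basis: "\<And>i. i \<in> {1..d} \<Longrightarrow> s (basis_cfg i) = \<alpha> i * \<beta> (if i \<in> B then 0 else i)"
    and norms: "(\<Sum>i=1..d. (cmod (\<alpha> i))\<^sup>2) * (\<Sum>j\<in>insert 0 ({1..d} - B). (cmod (\<beta> j))\<^sup>2) \<le> 1"
    using basis_amplitudes_factor[OF assms(1) \<open>0 \<in> B\<close> fac loc] by blast
  define U where "U = (\<Sum>i=1..d. (cmod (\<alpha> i))\<^sup>2)"
  define V where "V = (\<Sum>j\<in>insert 0 ({1..d} - B). (cmod (\<beta> j))\<^sup>2)"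
  define T where "T = (\<Sum>i=1..k-1. (cmod (c i))\<^sup>2)"
  have "card ({1..d} \<inter> B) \<le> card (B - {0})"
    using \<open>B \<subseteq> {..<Suc d}\<close> finite_subset by (intro card_mono) auto
  then have "card ({1..d} \<inter> B) \<le> k - 1"
    using \<open>0 \<in> B\<close> \<open>card B \<le> k\<close> by simp
  then have weighted: "(\<Sum>i=1..d. (cmod (\<beta> (if i \<in> B then 0 else i)))\<^sup>2 * (cmod (c i))\<^sup>2) \<le> T * V"
    unfolding T_def V_def using assms(4,5) antitone
    by (intro sum_block_weighted_le[where d = d]) (auto intro: power_mono)
  have "cmod (inner_st (Suc d) (qdim d) s (wvec {1..d} c))
      \<le> (\<Sum>i=1..d. cmod (cnj (s (basis_cfg i)) * c i))"
    unfolding inner_st_wvec[OF subset_refl] by (rule norm_sum)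
  also have "\<dots> = (\<Sum>i=1..d. cmod (\<alpha> i) * (cmod (\<beta> (if i \<in> B then 0 else i)) * cmod (c i)))"
    by (intro sum.cong refl) (simp add: s_basis norm_mult)
  finally have "(cmod (inner_st (Suc d) (qdim d) s (wvec {1..d} c)))\<^sup>2
      \<le> (\<Sum>i=1..d. cmod (\<alpha> i) * (cmod (\<beta> (if i \<in> B then 0 else i)) * cmod (c i)))\<^sup>2"
    by (rule power_mono) simp
  also have "\<dots> \<le> U * (\<Sum>i=1..d. (cmod (\<beta> (if i \<in> B then 0 else i)))\<^sup>2 * (cmod (c i))\<^sup>2)"
    unfolding U_def by (rule Cauchy_Schwarz_ineq_sum[THEN order_trans]) (simp add: power_mult_distrib)
  also have "\<dots> \<le> U * (T * V)"
    using weighted by (simp add: U_def mult_left_mono sum_nonneg)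
  also have "\<dots> = T * (U * V)" by (simp only: ac_simps)
  also have "\<dots> \<le> T"
    using norms by (intro mult_left_le) (simp_all add: U_def V_def T_def sum_nonneg)
  finally show ?thesis unfolding T_def .
qed

lemma sum_initial_segment_pos:
  fixes c :: "nat \<Rightarrow> complex"
  assumes "(\<Sum>i=1..d. (cmod (c i))\<^sup>2) = 1"
    and "\<forall>i j. 1 \<le> i \<longrightarrow> i \<le> j \<longrightarrow> j \<le> d \<longrightarrow> cmod (c j) \<le> cmod (c i)" and "1 \<le> m"
  shows "0 < (\<Sum>i=1..m. (cmod (c i))\<^sup>2)"
proof -
  have "c 1 \<noteq> 0"
  proof
    assume "c 1 = 0"
    then have "(\<Sum>i=1..d. (cmod (c i))\<^sup>2) = 0"
      using assms(2) by (intro sum.neutral) force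
    with assms(1) show False by simp
  qed
  then show ?thesis
    using \<open>1 \<le> m\<close> by (intro sum_pos2[of _ 1]) auto
qed

lemma normalized_truncation:
  fixes c :: "nat \<Rightarrow> complex" and d k :: nat
  defines "T \<equiv> \<Sum>i=1..k-1. (cmod (c i))\<^sup>2"
  defines "\<psi> \<equiv> wvec {1..k-1} (\<lambda>i. complex_of_real (1 / sqrt T) * c i)"
  assumes "0 < T" and "k \<le> d"
  shows "\<psi> \<in> B_states d k" and "(cmod (inner_st (Suc d) (qdim d) \<psi> (wvec {1..d} c)))\<^sup>2 = T"
proof -
  have sub: "{1..k-1} \<subseteq> {1..d}" using \<open>k \<le> d\<close> by auto
  define r where "r = 1 / sqrt T"
  have \<psi>_r: "\<psi> = wvec {1..k-1} (\<lambda>i. complex_of_real r * c i)"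
    unfolding \<psi>_def r_def ..
  have "(\<Sum>x\<in>configs {..<Suc d} (qdim d). (cmod (\<psi> x))\<^sup>2) = r\<^sup>2 * T"
    unfolding \<psi>_r sum_norm_wvec[OF sub] T_def
    by (simp add: norm_mult power_mult_distrib sum_distrib_left)
  also have "\<dots> = 1" using \<open>0 < T\<close> by (simp add: r_def power_divide)
  finally show "\<psi> \<in> B_states d k"
    using sub unfolding B_states_def is_state_def \<psi>_r by (intro CollectI conjI exI) auto
  have "inner_st (Suc d) (qdim d) \<psi> (wvec {1..d} c)
      = (\<Sum>i=1..k-1. complex_of_real r * (cnj (c i) * c i))"
    unfolding \<psi>_r inner_st_wvec_wvec[OF sub subset_refl] Int_absorb2[OF sub]
    by (simp add: mult.assoc)
  also have "\<dots> = complex_of_real (r * T)"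
    unfolding T_def of_real_mult of_real_sum sum_distrib_left
    by (simp add: complex_norm_square mult.commute del: of_real_power)
  finally show "(cmod (inner_st (Suc d) (qdim d) \<psi> (wvec {1..d} c)))\<^sup>2 = T"
    using \<open>0 < T\<close> by (simp add: r_def real_div_sqrt)
qed

lemma is_max_value_subset:
  "is_max_value S A f \<Longrightarrow> x \<in> B \<Longrightarrow> B \<subseteq> A \<Longrightarrow> f x = S \<Longrightarrow> is_max_value S B f"
  unfolding is_max_value_def by blast

theorem lemma1:
  fixes d k :: nat and c :: "nat \<Rightarrow> complex"
  assumes "2 \<le> k" and "k \<le> d"
    and "is_state (Suc d) (qdim d) (wvec {1..d} c)"
    and "\<forall>i j. 1 \<le> i \<longrightarrow> i \<le> j \<longrightarrow> j \<le> d \<longrightarrow> cmod (c j) \<le> cmod (c i)"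
  shows "is_max_value (\<Sum>i=1..k-1. (cmod (c i))\<^sup>2)
           {s. is_state (Suc d) (qdim d) s \<and> k_producible (Suc d) (qdim d) k s}
           (\<lambda>s. (cmod (inner_st (Suc d) (qdim d) s (wvec {1..d} c)))\<^sup>2)
       \<and> is_max_value (\<Sum>i=1..k-1. (cmod (c i))\<^sup>2)
           (B_states d k)
           (\<lambda>s. (cmod (inner_st (Suc d) (qdim d) s (wvec {1..d} c)))\<^sup>2)
       \<and> ((\<Sum>i=1..k-1. (cmod (c i))\<^sup>2) > 0 \<longrightarrow>
            (let psic = wvec {1..k-1}
                   (\<lambda>i. complex_of_real (1 / sqrt (\<Sum>i=1..k-1. (cmod (c i))\<^sup>2)) * c i)
             in psic \<in> B_states d k \<and>
                (cmod (inner_st (Suc d) (qdim d) psic (wvec {1..d} c)))\<^sup>2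
                  = (\<Sum>i=1..k-1. (cmod (c i))\<^sup>2)))"
proof -
  let ?T = "\<Sum>i=1..k-1. (cmod (c i))\<^sup>2"
  let ?f = "\<lambda>s. (cmod (inner_st (Suc d) (qdim d) s (wvec {1..d} c)))\<^sup>2"
  let ?P = "{s. is_state (Suc d) (qdim d) s \<and> k_producible (Suc d) (qdim d) k s}"
  let ?\<psi> = "wvec {1..k-1} (\<lambda>i. complex_of_real (1 / sqrt ?T) * c i)"
  have "(\<Sum>i=1..d. (cmod (c i))\<^sup>2) = 1"
    using assms(3) by (simp add: is_state_def sum_norm_wvec)
  then have "0 < ?T"
    using assms(1,4) by (intro sum_initial_segment_pos) auto
  then have \<psi>: "?\<psi> \<in> B_states d k" "?f ?\<psi> = ?T"
    using normalized_truncation assms(2) by blast+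
  moreover have sub: "B_states d k \<subseteq> ?P"
    using assms(1) by (intro B_states_k_producible) simp
  moreover have "is_max_value ?T ?P ?f"
    using \<psi> sub assms k_producible_overlap_le unfolding is_max_value_def by blast
  ultimately show ?thesis
    by (auto intro: is_max_value_subset)
qed

end
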